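(* Let there be two states and let $\mu\in(0,1)$. Suppose the updating rule respects the Blackwell order for $\mu$, and $\varphi=\varphi^{\mu}$ has a contractive error at some $x'\in(\mu,1]$ but produces no expansive error. Then there exists $x^*\in[\mu,x')$ such that $\varphi(x)=x^*$ for all $x\in[x^*,1)$; moreover $\varphi(x)=x$ for all $x\in[\mu,x^*]$ and $\varphi(1)\ge x^*$.
   Context: Two states $\Theta=\{0,1\}$; a belief is identified with the probability of state $1$, so the belief space is $\Delta=[0,1]$, and the prior $\mu\in(0,1)$. An experiment $\pi:\Theta\to\Delta(S)$ ($S$ finite) with prior $\mu$ induces the Bayesian distribution over posteriors $\rho_B$, a finitely supported distribution on $[0,1]$ with mean $\mu$ (every such distribution arises from some experiment). Blackwell order: $\pi\succeq\pi'$ iff $\rho_B'$ is a mean-preserving contraction of $\rho_B$. An updating rule is given, for each prior $\mu$, by a distortion function $\varphi^{\mu}:[0,1]\to[0,1]$: when the Bayesian posterior is $x$, the decision maker holds belief $\varphi^{\mu}(x)$. For a compact action set $A$, continuous $u:A\times\Theta\to\mathbb{R}$, and consistent choice $a^*:[0,1]\to A$ (i.e. $a^*(y)\in\arg\max_{a}\mathbb{E}_y u(a,\theta)$ for all $y$), let $W(x)=\mathbb{E}_x u(a^*(\varphi^{\mu}(x)),\theta)$. The rule respects the Blackwell order for $\mu$ if for all such $A,u,a^*$ and all $\pi\succeq\pi'$, $\mathbb{E}_{\rho_B}W\ge\mathbb{E}_{\rho_B'}W$. $\varphi$ has an expansive error at $x$ if $\varphi(x)$ is not on the closed segment between $x$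 and $\mu$, and a contractive error at $x$ if $\varphi(x)$ is on that segment and $\varphi(x)\ne x$. *)

theory Defs
  imports "HOL-Analysis.Analysis" "HOL-Probability.Probability"
begin

text \<open>Two states 0 and 1; a belief is the probability of state 1.
  Expected utility of action a at belief y: (1 - y) * u a 0 + y * u a 1.\<close>

definition exp_util :: "(real \<Rightarrow> nat \<Rightarrow> real) \<Rightarrow> real \<Rightarrow> real \<Rightarrow> real" where
  "exp_util u y a = (1 - y) * u a 0 + y * u a 1"

text \<open>Bayesian distribution over posteriors for prior mu: finitely supported
  distribution on [0,1] with mean mu (every such one arises from an experiment).\<close>

definition bayes_dist :: "real \<Rightarrow> real pmf \<Rightarrow> bool" where
  "bayes_dist mu \<rho> \<longleftrightarrow> finite (set_pmf \<rho>) \<and> set_pmf \<rho> \<subseteq> {0..1}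
      \<and> measure_pmf.expectation \<rho> (\<lambda>x. x) = mu"

definition mpc :: "real pmf \<Rightarrow> real pmf \<Rightarrow> bool" where
  "mpc \<rho>' \<rho> \<longleftrightarrow> (\<exists>K :: real \<Rightarrow> real pmf.
      (\<forall>y\<in>set_pmf \<rho>'. measure_pmf.expectation (K y) (\<lambda>x. x) = y)
      \<and> \<rho> = bind_pmf \<rho>' K)"

definition consistent_choice :: "real set \<Rightarrow> (real \<Rightarrow> nat \<Rightarrow> real) \<Rightarrow> (real \<Rightarrow> real) \<Rightarrow> bool" where
  "consistent_choice A u astar \<longleftrightarrow>
     (\<forall>y\<in>{0..1}. astar y \<in> A \<and> (\<forall>a\<in>A. exp_util u y a \<le> exp_util u y (astar y)))"

definition respects_blackwell :: "real \<Rightarrow> (real \<Rightarrow> real) \<Rightarrow> bool" where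
  "respects_blackwell mu \<phi> \<longleftrightarrow>
     (\<forall>(A :: real set) (u :: real \<Rightarrow> nat \<Rightarrow> real) (astar :: real \<Rightarrow> real).
        compact A \<and> continuous_on A (\<lambda>a. u a 0) \<and> continuous_on A (\<lambda>a. u a 1)
        \<and> consistent_choice A u astar \<longrightarrow>
        (\<forall>\<rho> \<rho>'. bayes_dist mu \<rho> \<and> bayes_dist mu \<rho>' \<and> mpc \<rho>' \<rho> \<longrightarrow>
           measure_pmf.expectation \<rho> (\<lambda>x. exp_util u x (astar (\<phi> x)))
           \<ge> measure_pmf.expectation \<rho>' (\<lambda>x. exp_util u x (astar (\<phi> x)))))"

definition expansive_error :: "real \<Rightarrow> (real \<Rightarrow> real) \<Rightarrow> real \<Rightarrow> bool" where
  "expansive_error mu \<phi> x \<longleftrightarrow> \<phi> x \<notin> closed_segment x mu"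

definition contractive_error :: "real \<Rightarrow> (real \<Rightarrow> real) \<Rightarrow> real \<Rightarrow> bool" where
  "contractive_error mu \<phi> x \<longleftrightarrow> \<phi> x \<in> closed_segment x mu \<and> \<phi> x \<noteq> x"

end

theory Submission
  imports Defs
begin

(* Respecting the Blackwell order makes the decision maker's value function convex on [0, 1],
  since a two-point mean-preserving spread of a single posterior is a Blackwell improvement.
  For the bet "pay t, win 1 in state 1", which the decision maker takes iff his belief exceeds t,
  the value function is x - t where the bet is taken and 0 elsewhere. Convexity, together with
  the value 0 at t, forces that for every t \<ge> 0 either all Bayesian posteriors in (t, 1) lead to
  a belief above t or none does, and in the first case so does the posterior 1. Given a
  contractive error phi c < c with mu < c < 1 and no expansive errors, taking t just above or
  just below phi c shows that phi is the identity on [mu, phi c] and constantly phi c on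
  [phi c, 1). *)

definition blackwell_monotone :: "real \<Rightarrow> (real \<Rightarrow> real) \<Rightarrow> bool" where
  "blackwell_monotone mu f \<longleftrightarrow>
     (\<forall>\<rho> \<rho>'. bayes_dist mu \<rho> \<and> bayes_dist mu \<rho>' \<and> mpc \<rho>' \<rho> \<longrightarrow>
        measure_pmf.expectation \<rho>' f \<le> measure_pmf.expectation \<rho> f)"

lemma respects_blackwell_iff_blackwell_monotone:
  "respects_blackwell mu \<phi> \<longleftrightarrow>
     (\<forall>A u astar. compact A \<and> continuous_on A (\<lambda>a. u a 0) \<and> continuous_on A (\<lambda>a. u a 1)
        \<and> consistent_choice A u astar \<longrightarrow>
        blackwell_monotone mu (\<lambda>x. exp_util u x (astar (\<phi> x))))"
  unfolding respects_blackwell_def blackwell_monotone_def by blast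

lemma not_expansive_error_iff:
  "\<not> expansive_error mu \<phi> x \<longleftrightarrow> min x mu \<le> \<phi> x \<and> \<phi> x \<le> max x mu"
  by (auto simp: expansive_error_def closed_segment_eq_real_ivl)

lemma expectation_bind_pmf_finite:
  fixes h :: "'b \<Rightarrow> real"
  assumes "finite (set_pmf p)" "\<And>x. x \<in> set_pmf p \<Longrightarrow> finite (set_pmf (K x))"
  shows "measure_pmf.expectation (p \<bind> K) h =
    measure_pmf.expectation p (\<lambda>x. measure_pmf.expectation (K x) h)"
  using assms by (simp add: pmf_expectation_bind[of "set_pmf p"] integral_measure_pmf[of "set_pmf p"])

definition two_point_pmf :: "real \<Rightarrow> 'a \<Rightarrow> 'a \<Rightarrow> 'a pmf" where
  "two_point_pmf p a b = map_pmf (\<lambda>c. if c then b else a) (bernoulli_pmf p)"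

lemma set_two_point_pmf: "set_pmf (two_point_pmf p a b) \<subseteq> {a, b}"
  unfolding two_point_pmf_def by auto

lemma expectation_two_point_pmf:
  fixes f :: "'a \<Rightarrow> real"
  assumes "0 \<le> p" "p \<le> 1"
  shows "measure_pmf.expectation (two_point_pmf p a b) f = (1 - p) * f a + p * f b"
  using assms unfolding two_point_pmf_def by simp

lemma prior_split_with_endpoint:
  fixes mu c :: real
  assumes "0 < mu" "mu < 1" "0 < c" "c < 1"
  obtains z q where "z \<in> {0, 1}" "0 < q" "q \<le> 1" "(1 - q) * z + q * c = mu"
proof (cases "mu < c")
  case True
  define q where "q = mu / c"
  have "0 < q" "q \<le> 1"
    using True assms by (simp_all add: q_def)
  moreover have "(1 - q) * 0 + q * c = mu"
    using assms by (simp add: q_def)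
  ultimately show ?thesis
    using that by blast
next
  case False
  define q where "q = (1 - mu) / (1 - c)"
  have "0 < q" "q \<le> 1"
    using False assms by (simp_all add: q_def)
  moreover have "q * (1 - c) = 1 - mu"
    using assms by (simp add: q_def)
  then have "(1 - q) * 1 + q * c = mu"
    by (simp add: algebra_simps)
  ultimately show ?thesis
    using that by blast
qed

(* Spreading the posterior c = (1 - t) x + t y of a two-point Bayesian distribution, whose other
  point is 0 or 1, into x and y is a Blackwell improvement. *)
lemma convex_on_if_blackwell_monotone:
  fixes f :: "real \<Rightarrow> real"
  assumes mu: "0 < mu" "mu < 1" and mono: "blackwell_monotone mu f"
  shows "convex_on {0..1} f"
proof (rule convex_on_linorderI)
  fix t x y :: real
  assume t: "0 < t" "t < 1" and xy: "x \<in> {0..1}" "y \<in> {0..1}" "x < y"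
  define c where "c = (1 - t) * x + t * y"
  have "c - x = t * (y - x)" "y - c = (1 - t) * (y - x)"
    by (simp_all add: c_def algebra_simps)
  then have c: "x < c" "c < y"
    using t xy by (metis diff_gt_0_iff_gt mult_pos_pos)+
  obtain z q where z: "z \<in> {0, 1}" and q: "0 < q" "q \<le> 1" and mean: "(1 - q) * z + q * c = mu"
    using prior_split_with_endpoint[OF mu, of c] c xy by auto
  have "z \<noteq> c" using z c xy by auto
  define K where "K = (\<lambda>w. if w = c then two_point_pmf t x y else return_pmf w)"
  define \<rho>' where "\<rho>' = two_point_pmf q z c"
  define \<rho> where "\<rho> = \<rho>' \<bind> K"
  have E\<rho>': "measure_pmf.expectation \<rho>' g = (1 - q) * g z + q * g c" for g :: "real \<Rightarrow> real"
    unfolding \<rho>'_def using q by (simp add: expectation_two_point_pmf)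
  have spread_mean: "measure_pmf.expectation (K c) (\<lambda>w. w) = c"
    using t by (simp add: K_def expectation_two_point_pmf c_def)
  have set_\<rho>: "set_pmf \<rho> \<subseteq> {x, y, z}"
    using set_two_point_pmf[of q z c] set_two_point_pmf[of t x y]
    by (auto simp: \<rho>_def \<rho>'_def K_def split: if_splits)
  have E\<rho>: "measure_pmf.expectation \<rho> g = (1 - q) * g z + q * ((1 - t) * g x + t * g y)"
    for g :: "real \<Rightarrow> real"
  proof -
    have "measure_pmf.expectation \<rho> g =
        measure_pmf.expectation \<rho>' (\<lambda>w. measure_pmf.expectation (K w) g)"
      unfolding \<rho>_def using set_two_point_pmf[of q z c] set_two_point_pmf[of t x y]
      by (intro expectation_bind_pmf_finite) (auto simp: \<rho>'_def K_def intro: finite_subset)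
    also have "\<dots> = (1 - q) * g z + q * ((1 - t) * g x + t * g y)"
      using t \<open>z \<noteq> c\<close> by (simp add: E\<rho>' K_def expectation_two_point_pmf)
    finally show ?thesis .
  qed
  have "bayes_dist mu \<rho>'"
    using set_two_point_pmf[of q z c, folded \<rho>'_def] z c xy mean
    by (auto simp: bayes_dist_def E\<rho>' intro: finite_subset)
  moreover have "bayes_dist mu \<rho>"
    using set_\<rho> z xy mean E\<rho>[of "\<lambda>w. w"]
    by (auto simp: bayes_dist_def c_def intro: finite_subset)
  moreover have "mpc \<rho>' \<rho>"
    unfolding mpc_def using set_two_point_pmf[of q z c] spread_mean
    by (intro exI[of _ K]) (auto simp: K_def \<rho>_def)
  ultimately have "measure_pmf.expectation \<rho>' f \<le> measure_pmf.expectation \<rho> f"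
    using mono unfolding blackwell_monotone_def by blast
  then show "f ((1 - t) *\<^sub>R x + t *\<^sub>R y) \<le> (1 - t) * f x + t * f y"
    using q by (simp add: E\<rho> E\<rho>' c_def)
qed simp

lemma convex_on_value_if_respects_blackwell:
  assumes "0 < mu" "mu < 1" and "respects_blackwell mu \<phi>"
    and "compact A" "continuous_on A (\<lambda>a. u a 0)" "continuous_on A (\<lambda>a. u a 1)"
    and "consistent_choice A u astar"
  shows "convex_on {0..1} (\<lambda>x. exp_util u x (astar (\<phi> x)))"
  using assms by (intro convex_on_if_blackwell_monotone)
    (auto simp: respects_blackwell_iff_blackwell_monotone)

(* The decision problem: bet on state 1 at price t, or abstain. *)
lemma convex_on_threshold_value:
  assumes "0 < mu" "mu < 1" and "respects_blackwell mu \<phi>"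
  shows "convex_on {0..1} (\<lambda>x. if t < \<phi> x then x - t else 0)"
proof -
  define u :: "real \<Rightarrow> nat \<Rightarrow> real" where "u = (\<lambda>a n. a * (real n - t))"
  define astar :: "real \<Rightarrow> real" where "astar = (\<lambda>y. if t < y then 1 else 0)"
  have exp_util_u: "exp_util u y a = a * (y - t)" for y a
    by (simp add: exp_util_def u_def algebra_simps)
  have "consistent_choice {0, 1} u astar"
    unfolding consistent_choice_def astar_def exp_util_u by auto
  moreover have "continuous_on {0, 1} (\<lambda>a. u a n)" for n
    unfolding u_def by (intro continuous_intros)
  ultimately have "convex_on {0..1} (\<lambda>x. exp_util u x (astar (\<phi> x)))"
    using assms by (intro convex_on_value_if_respects_blackwell) auto
  moreover have "(\<lambda>x. exp_util u x (astar (\<phi> x))) = (\<lambda>x. if t < \<phi> x then x - t else 0)"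
    by (simp add: fun_eq_iff exp_util_u astar_def)
  ultimately show ?thesis
    by simp
qed

lemma convex_on_three_point:
  fixes f :: "real \<Rightarrow> real"
  assumes "convex_on I f" "a \<in> I" "b \<in> I" "a < y" "y < b"
  shows "(b - a) * f y \<le> (b - y) * f a + (y - a) * f b"
proof -
  define s where "s = (y - a) / (b - a)"
  have s: "0 \<le> s" "s \<le> 1" "s * (b - a) = y - a" "(1 - s) * (b - a) = b - y"
    using assms(4,5) by (auto simp: s_def field_simps)
  have "y = (1 - s) *\<^sub>R a + s *\<^sub>R b"
    using s(3) by (simp add: algebra_simps)
  then have "f y \<le> (1 - s) * f a + s * f b"
    using convex_onD[OF assms(1) s(1,2) assms(2,3)] by simp
  then have "(b - a) * f y \<le> (b - a) * ((1 - s) * f a + s * f b)"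
    using assms(4,5) by (intro mult_left_mono) auto
  also have "\<dots> = ((1 - s) * (b - a)) * f a + (s * (b - a)) * f b"
    by (simp add: algebra_simps)
  finally show ?thesis
    by (simp only: s(3,4))
qed

context
  fixes mu :: real and \<phi> :: "real \<Rightarrow> real"
  assumes mu: "0 < mu" "mu < 1" and blackwell: "respects_blackwell mu \<phi>"
begin

lemma threshold_exceeded_rightwards:
  assumes "0 \<le> t" "t < y" "y < x" "x \<le> 1" "t < \<phi> y"
  shows "t < \<phi> x"
proof (rule ccontr)
  assume "\<not> t < \<phi> x"
  moreover have "(if t < \<phi> t then t - t else 0) = (0::real)"
    by simp
  ultimately have "(x - t) * (y - t) \<le> 0"
    using convex_on_three_point[OF convex_on_threshold_value[OF mu blackwell, of t], of t x y]
      assms by simp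
  moreover have "0 < (x - t) * (y - t)"
    using assms by simp
  ultimately show False
    by linarith
qed

(* Comparing with the posterior 1, where the bet is worth at most 1 - t. *)
lemma threshold_exceeded_leftwards:
  assumes "0 \<le> t" "t < x" "x < y" "y < 1" "t < \<phi> y"
  shows "t < \<phi> x"
proof (rule ccontr)
  assume "\<not> t < \<phi> x"
  then have "(1 - x) * (y - t) \<le> (y - x) * (if t < \<phi> 1 then 1 - t else 0)"
    using convex_on_three_point[OF convex_on_threshold_value[OF mu blackwell, of t], of x 1 y]
      assms by simp
  also have "\<dots> \<le> (y - x) * (1 - t)"
    using assms by (intro mult_left_mono) auto
  finally have "(1 - x) * (y - t) \<le> (y - x) * (1 - t)" .
  moreover have "(1 - x) * (y - t) - (y - x) * (1 - t) = (x - t) * (1 - y)"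
    by (simp add: algebra_simps)
  moreover have "0 < (x - t) * (1 - y)"
    using assms by simp
  ultimately show False
    by linarith
qed

lemma threshold_exceeded_propagates:
  assumes "0 \<le> t" "t < y" "y < 1" "t < x" "x \<le> 1" "t < \<phi> y"
  shows "t < \<phi> x"
  using threshold_exceeded_rightwards[of t y x] threshold_exceeded_leftwards[of t x y] assms
  by (cases x y rule: linorder_cases) auto

context
  assumes no_expansive_error: "\<forall>x\<in>{0..1}. \<not> expansive_error mu \<phi> x"
begin

lemma between_posterior_and_prior:
  assumes "0 \<le> x" "x \<le> 1"
  shows "min x mu \<le> \<phi> x" "\<phi> x \<le> max x mu"
  using no_expansive_error assms by (auto simp: not_expansive_error_iff)

lemma interior_contractive_error:
  assumes "x' \<in> {mu<..1}" "contractive_error mu \<phi> x'"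
  shows "\<exists>c. mu < c \<and> c < 1 \<and> c \<le> x' \<and> \<phi> c < c"
proof -
  have "\<phi> x' < x'"
    using assms between_posterior_and_prior[of x'] mu
    by (auto simp: contractive_error_def closed_segment_eq_real_ivl)
  show ?thesis
  proof (cases "x' < 1")
    case True
    then show ?thesis
      using assms \<open>\<phi> x' < x'\<close> by auto
  next
    case False
    then have "x' = 1"
      using assms by auto
    show ?thesis
    proof (rule ccontr)
      assume "\<not> ?thesis"
      then have fixed: "c \<le> \<phi> c" if "mu < c" "c < 1" for c
        using that \<open>x' = 1\<close> by (meson less_imp_le not_less)
      define t where "t = (max (\<phi> 1) mu + 1) / 2"
      define y where "y = (t + 1) / 2"
      have "\<phi> 1 < 1"
        using \<open>\<phi> x' < x'\<close> \<open>x' = 1\<close> by simp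
      then have "0 \<le> t" "\<phi> 1 \<le> t" "mu < t" "t < y" "y < 1"
        using mu by (auto simp: t_def y_def)
      moreover have "t < \<phi> y"
        using fixed[of y] \<open>mu < t\<close> \<open>t < y\<close> \<open>y < 1\<close> by simp
      ultimately show False
        using threshold_exceeded_propagates[of t y 1] by simp
    qed
  qed
qed

lemma plateau_upper_bound:
  assumes "mu < c" "c < 1" "\<phi> c < c" "0 \<le> y" "y < 1"
  shows "\<phi> y \<le> \<phi> c"
proof (rule ccontr)
  assume "\<not> \<phi> y \<le> \<phi> c"
  define t where "t = (\<phi> c + min (\<phi> y) c) / 2"
  have "mu \<le> \<phi> c"
    using between_posterior_and_prior[of c] assms mu by simp
  then have t: "0 \<le> t" "\<phi> c < t" "t < c" "t < \<phi> y"
    using assms \<open>\<not> \<phi> y \<le> \<phi> c\<close> mu by (auto simp: t_def)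
  moreover have "t < y"
    using between_posterior_and_prior[of y] assms t \<open>mu \<le> \<phi> c\<close> by auto
  ultimately show False
    using threshold_exceeded_propagates[of t y c] assms by simp
qed

lemma plateau_lower_bound:
  assumes "mu < c" "c < 1" "mu \<le> x" "x \<le> 1"
  shows "min x (\<phi> c) \<le> \<phi> x"
proof (rule ccontr)
  assume "\<not> min x (\<phi> c) \<le> \<phi> x"
  then have "\<phi> x < x" "\<phi> x < \<phi> c"
    by auto
  moreover have "mu \<le> \<phi> x" "\<phi> c \<le> c"
    using between_posterior_and_prior[of x] between_posterior_and_prior[of c] assms mu by auto
  ultimately show False
    using threshold_exceeded_propagates[of "\<phi> x" c x] assms mu by simp
qed

end

end

theorem lemma6:
  fixes mu :: real and \<phi> :: "real \<Rightarrow> real" and x' :: real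
  assumes "0 < mu" and "mu < 1"
    and "\<forall>x\<in>{0..1}. \<phi> x \<in> {0..1}"
    and "respects_blackwell mu \<phi>"
    and "x' \<in> {mu<..1}" and "contractive_error mu \<phi> x'"
    and "\<forall>x\<in>{0..1}. \<not> expansive_error mu \<phi> x"
  shows "\<exists>xs\<in>{mu..<x'}. (\<forall>x\<in>{xs..<1}. \<phi> x = xs) \<and> (\<forall>x\<in>{mu..xs}. \<phi> x = x) \<and> \<phi> 1 \<ge> xs"
proof -
  note setting = assms(1,2,4,7)
  obtain c where c: "mu < c" "c < 1" "c \<le> x'" "\<phi> c < c"
    using interior_contractive_error[OF setting assms(5,6)] by blast
  have "mu \<le> \<phi> c"
    using between_posterior_and_prior[OF setting, of c] c assms(1) by simp
  have upper: "\<phi> x \<le> \<phi> c" if "\<phi> c \<le> x" "x < 1" for x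
    using plateau_upper_bound[OF setting c(1,2,4), of x] that \<open>mu \<le> \<phi> c\<close> assms(1) by simp
  have lower: "min x (\<phi> c) \<le> \<phi> x" if "mu \<le> x" "x \<le> 1" for x
    using plateau_lower_bound[OF setting c(1,2) that] .
  have contracting: "\<phi> x \<le> x" if "mu \<le> x" "x \<le> 1" for x
    using between_posterior_and_prior[OF setting, of x] that assms(1) by simp
  show ?thesis
  proof (intro bexI[of _ "\<phi> c"] conjI ballI)
    show "\<phi> c \<in> {mu..<x'}"
      using c \<open>mu \<le> \<phi> c\<close> by simp
  next
    fix x assume "x \<in> {\<phi> c..<1}"
    then show "\<phi> x = \<phi> c"
      using upper[of x] lower[of x] \<open>mu \<le> \<phi> c\<close> by simp
  next
    fix x assume "x \<in> {mu..\<phi> c}"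
    then show "\<phi> x = x"
      using contracting[of x] lower[of x] c by simp
  next
    show "\<phi> c \<le> \<phi> 1"
      using lower[of 1] c by simp
  qed
qed

end
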